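(* For every epistemic transition system, every history $h$ of it, all coalitions $C,D$ with $C\cap D=\varnothing$ and all formulas $\phi,\psi\in\Phi$: if $h\Vdash\mathsf{H}_C(\phi\to\psi)$ and $h\Vdash\mathsf{H}_D\phi$, then $h\Vdash\mathsf{H}_{C\cup D}\psi$.
   Context: Fix a set of agents $\mathcal{A}$; a coalition is a subset of $\mathcal{A}$. Language $\Phi$: $\phi ::= p \mid \neg\phi \mid \phi\to\phi \mid \mathsf{K}_C\phi \mid \mathsf{H}_C\phi$ ($C\subseteq\mathcal{A}$). An epistemic transition system is a tuple $(W,\{\sim_a\}_{a\in\mathcal{A}},V,M,\pi)$ with $W$ a set of states, each $\sim_a$ an equivalence relation on $W$, $V$ a nonempty set, $M\subseteq W\times V^{\mathcal{A}}\times W$, $\pi$ mapping propositional variables to subsets of $W$. For profiles $\mathbf{s}_1\in V^{C_1},\mathbf{s}_2\in V^{C_2}$ and $C\subseteq C_1\cap C_2$, $\mathbf{s}_1=_C\mathbf{s}_2$ means $(\mathbf{s}_1)_a=(\mathbf{s}_2)_a$ for all $a\in C$. A history is a sequence $(w_0,\mathbf{s}_1,w_1,\dots,\mathbf{s}_n,w_n)$, $n\ge0$, with $w_i\in W$, $\mathbf{s}_i\in V^{\mathcal{A}}$, $(w_i,\mathbf{s}_{i+1},w_{i+1})\in M$; $hd(h)$ is its last element, and $h::\mathbf{s}::w$ denotes extension. $h\approx_a h'$ iff the histories have the same length $n$, their $i$-th states are $\sim_a$-related for all $i$, and their $i$-th profiles agree at $a$ for all $i$; $h\approx_C h'$ iff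 $h\approx_a h'$ for all $a\in C$. Satisfaction: $h\Vdash p$ iff $hd(h)\in\pi(p)$; Boolean clauses standard; $h\Vdash\mathsf{K}_C\phi$ iff $h'\Vdash\phi$ for all histories $h'$ with $h\approx_C h'$; $h\Vdash\mathsf{H}_C\phi$ iff there is $\mathbf{s}\in V^C$ such that for every history $h'::\mathbf{s}'::w'$ with $h\approx_C h'$ and $\mathbf{s}=_C\mathbf{s}'$, $h'::\mathbf{s}'::w'\Vdash\phi$. *)

theory Defs
  imports Main
begin

datatype ('p, 'ag) form =
    Prop 'p
  | Neg "('p, 'ag) form"
  | Imp "('p, 'ag) form" "('p, 'ag) form"
  | Know "'ag set" "('p, 'ag) form"
  | Hows "'ag set" "('p, 'ag) form"

record ('w, 'ag, 'v, 'p) ets =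
  St :: "'w set"
  Ind :: "'ag \<Rightarrow> ('w \<times> 'w) set"
  Val :: "'v set"
  Mech :: "('w \<times> ('ag \<Rightarrow> 'v) \<times> 'w) set"
  Pi :: "'p \<Rightarrow> 'w set"

definition is_ets :: "('w, 'ag, 'v, 'p) ets \<Rightarrow> bool" where
  "is_ets T \<longleftrightarrow>
     (\<forall>a. equiv (St T) (Ind T a)) \<and>
     Val T \<noteq> {} \<and>
     Mech T \<subseteq> {(w, s, u). w \<in> St T \<and> (\<forall>a. s a \<in> Val T) \<and> u \<in> St T} \<and>
     (\<forall>p. Pi T p \<subseteq> St T)"

text \<open>A history (w0, s1, w1, ..., sn, wn) is represented as the initial state w0 together
  with the list [(s1,w1),...,(sn,wn)].\<close>
type_synonym ('w, 'ag, 'v) hist = "'w \<times> (('ag \<Rightarrow> 'v) \<times> 'w) list"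

fun steps_ok :: "('w, 'ag, 'v, 'p) ets \<Rightarrow> 'w \<Rightarrow> (('ag \<Rightarrow> 'v) \<times> 'w) list \<Rightarrow> bool" where
  "steps_ok T w [] = True"
| "steps_ok T w ((s, u) # rest) = ((w, s, u) \<in> Mech T \<and> steps_ok T u rest)"

definition is_hist :: "('w, 'ag, 'v, 'p) ets \<Rightarrow> ('w, 'ag, 'v) hist \<Rightarrow> bool" where
  "is_hist T h \<longleftrightarrow> fst h \<in> St T \<and> steps_ok T (fst h) (snd h)"

definition hd_h :: "('w, 'ag, 'v) hist \<Rightarrow> 'w" where
  "hd_h h = (if snd h = [] then fst h else snd (last (snd h)))"

definition ext_h :: "('w, 'ag, 'v) hist \<Rightarrow> ('ag \<Rightarrow> 'v) \<Rightarrow> 'w \<Rightarrow> ('w, 'ag, 'v) hist" where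
  "ext_h h s w = (fst h, snd h @ [(s, w)])"

definition indist_a :: "('w, 'ag, 'v, 'p) ets \<Rightarrow> 'ag \<Rightarrow> ('w, 'ag, 'v) hist \<Rightarrow> ('w, 'ag, 'v) hist \<Rightarrow> bool" where
  "indist_a T a h h' \<longleftrightarrow>
     length (snd h) = length (snd h') \<and>
     (fst h, fst h') \<in> Ind T a \<and>
     (\<forall>i < length (snd h). (snd (snd h ! i), snd (snd h' ! i)) \<in> Ind T a \<and>
                           fst (snd h ! i) a = fst (snd h' ! i) a)"

definition indist :: "('w, 'ag, 'v, 'p) ets \<Rightarrow> 'ag set \<Rightarrow> ('w, 'ag, 'v) hist \<Rightarrow> ('w, 'ag, 'v) hist \<Rightarrow> bool" where
  "indist T C h h' \<longleftrightarrow> (\<forall>a \<in> C. indist_a T a h h')"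

text \<open>Satisfaction. A coalition profile s in V^C is represented by a function agreeing
  with it on C (values outside C are irrelevant).\<close>
fun sat :: "('w, 'ag, 'v, 'p) ets \<Rightarrow> ('w, 'ag, 'v) hist \<Rightarrow> ('p, 'ag) form \<Rightarrow> bool" where
  "sat T h (Prop p) = (hd_h h \<in> Pi T p)"
| "sat T h (Neg \<phi>) = (\<not> sat T h \<phi>)"
| "sat T h (Imp \<phi> \<psi>) = (sat T h \<phi> \<longrightarrow> sat T h \<psi>)"
| "sat T h (Know C \<phi>) = (\<forall>h'. is_hist T h' \<and> indist T C h h' \<longrightarrow> sat T h' \<phi>)"
| "sat T h (Hows C \<phi>) =
     (\<exists>s. (\<forall>a \<in> C. s a \<in> Val T) \<and>
        (\<forall>h' s' w'. is_hist T (ext_h h' s' w') \<and> indist T C h h' \<and> (\<forall>a \<in> C. s a = s' a)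
                 \<longrightarrow> sat T (ext_h h' s' w') \<phi>))"

end

theory Submission
  imports Defs
begin

text \<open>The coalitions pool their strategies: C plays its know-how strategy for
  \<phi> \<longrightarrow> \<psi> and D its know-how strategy for \<phi>. Since C and D are disjoint
  the combined profile agrees with each of them on its own members, and every
  history C \<union> D cannot tell apart from h is one that neither C nor D can tell
  apart, so both strategies apply to every outcome and modus ponens gives \<psi>.\<close>

lemma indist_Un_iff:
  "indist T (C \<union> D) h h' \<longleftrightarrow> indist T C h h' \<and> indist T D h h'"
  by (auto simp: indist_def)

lemma sat_Hows_iff:
  "sat T h (Hows C \<phi>) \<longleftrightarrow>
     (\<exists>s. (\<forall>a \<in> C. s a \<in> Val T) \<and>
        (\<forall>h' s' w'. is_hist T (ext_h h' s' w') \<and> indist T C h h' \<and> (\<forall>a \<in> C. s' a = s a)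
                 \<longrightarrow> sat T (ext_h h' s' w') \<phi>))"
  by (auto simp: eq_commute)

theorem lemma11:
  fixes T :: "('w, 'ag, 'v, 'p) ets"
    and h :: "('w, 'ag, 'v) hist"
    and C D :: "'ag set"
    and \<phi> \<psi> :: "('p, 'ag) form"
  assumes "is_ets T"
    and "is_hist T h"
    and "C \<inter> D = {}"
    and "sat T h (Hows C (Imp \<phi> \<psi>))"
    and "sat T h (Hows D \<phi>)"
  shows "sat T h (Hows (C \<union> D) \<psi>)"
proof -
  obtain sC where sC_Val: "\<forall>a \<in> C. sC a \<in> Val T"
    and sC_wins: "\<And>h' s' w'. \<lbrakk>is_hist T (ext_h h' s' w'); indist T C h h'; \<forall>a \<in> C. s' a = sC a\<rbrakk>
                 \<Longrightarrow> sat T (ext_h h' s' w') (Imp \<phi> \<psi>)"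
    using assms(4) unfolding sat_Hows_iff by blast
  obtain sD where sD_Val: "\<forall>a \<in> D. sD a \<in> Val T"
    and sD_wins: "\<And>h' s' w'. \<lbrakk>is_hist T (ext_h h' s' w'); indist T D h h'; \<forall>a \<in> D. s' a = sD a\<rbrakk>
                 \<Longrightarrow> sat T (ext_h h' s' w') \<phi>"
    using assms(5) unfolding sat_Hows_iff by blast
  define s where "s a = (if a \<in> C then sC a else sD a)" for a
  have s_on_C: "\<forall>a \<in> C. s a = sC a" and s_on_D: "\<forall>a \<in> D. s a = sD a"
    using assms(3) by (auto simp: s_def)
  show ?thesis
    unfolding sat_Hows_iff
  proof (intro exI conjI allI impI)
    show "\<forall>a \<in> C \<union> D. s a \<in> Val T"
      using sC_Val sD_Val s_on_C s_on_D by auto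
  next
    fix h' s' w'
    assume "is_hist T (ext_h h' s' w') \<and> indist T (C \<union> D) h h' \<and> (\<forall>a \<in> C \<union> D. s' a = s a)"
    with s_on_C s_on_D sC_wins sD_wins show "sat T (ext_h h' s' w') \<psi>"
      by (auto simp: indist_Un_iff)
  qed
qed

end
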